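(* Let $A\overset{i}{\to}U\overset{j}{\to}S$ be an extension of a semilattice of groups $A$ by an inverse semigroup $S$, let $\rho,\rho'$ be transversals of $j$, and let $\Lambda=(\alpha,\lambda,f)$, $\Lambda'=(\alpha',\lambda',f')$ be the twisted $S$-module structures on $A$ induced by $\rho$ and $\rho'$ respectively. Then there is a function $g:S\to A$ with $g(s)\in A_{\alpha(ss^{-1})}$ for all $s$ such that (i) $\alpha'=\alpha$; (ii) $\lambda'_s=\xi_{g(s)}\circ\lambda_s$ for all $s\in S$; (iii) $f'(s,t)g(st)=g(s)\lambda_s(g(t))f(s,t)$ for all $s,t\in S$.
   Context: A semilattice of groups is an inverse semigroup $A$ whose idempotents are central; $A_e=\{a: aa^{-1}=a^{-1}a=e\}$ for $e\in E(A)$. An extension of $A$ by $S$ is an inverse semigroup $U$ with a monomorphism $i:A\to U$ and an idempotent-separating epimorphism $j:U\to S$ with $i(A)=j^{-1}(E(S))$. A transversal of $j$ is a map $\rho:S\to U$ with $j\circ\rho=\mathrm{id}_S$ and $\rho(E(S))\subseteq E(U)$. The twisted $S$-module structure induced by $\rho$ is $(\alpha,\lambda,f)$ where $\alpha=i^{-1}\circ\rho|_{E(S)}:E(S)\to E(A)$, $\lambda_s(a)=i^{-1}(\rho(s)i(a)\rho(s)^{-1})$ for $s\in S,a\in A$, and $f(s,t)$ is the unique element of $A_{\alpha(stt^{-1}s^{-1})}$ with $\rho(s)\rho(t)=i(f(s,t))\rho(st)$. For $b\in A$, $\xi_b$ is the inner endomorphism $\xi_b(a)=bab^{-1}$. 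*)

theory Defs
  imports Main
begin

definition inverse_semigroup :: "('a \<Rightarrow> 'a \<Rightarrow> 'a) \<Rightarrow> bool" where
  "inverse_semigroup m \<longleftrightarrow>
     (\<forall>x y z. m (m x y) z = m x (m y z)) \<and>
     (\<forall>x. \<exists>!y. m (m x y) x = x \<and> m (m y x) y = y)"

definition sinv :: "('a \<Rightarrow> 'a \<Rightarrow> 'a) \<Rightarrow> 'a \<Rightarrow> 'a" where
  "sinv m x = (THE y. m (m x y) x = x \<and> m (m y x) y = y)"

definition idems :: "('a \<Rightarrow> 'a \<Rightarrow> 'a) \<Rightarrow> 'a set" where
  "idems m = {e. m e e = e}"

definition semilattice_of_groups :: "('a \<Rightarrow> 'a \<Rightarrow> 'a) \<Rightarrow> bool" where
  "semilattice_of_groups m \<longleftrightarrow> inverse_semigroup m \<and>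
     (\<forall>e \<in> idems m. \<forall>x. m e x = m x e)"

definition comp_grp :: "('a \<Rightarrow> 'a \<Rightarrow> 'a) \<Rightarrow> 'a \<Rightarrow> 'a set" where
  "comp_grp m e = {a. m a (sinv m a) = e \<and> m (sinv m a) a = e}"

definition hom :: "('a \<Rightarrow> 'a \<Rightarrow> 'a) \<Rightarrow> ('b \<Rightarrow> 'b \<Rightarrow> 'b) \<Rightarrow> ('a \<Rightarrow> 'b) \<Rightarrow> bool" where
  "hom m n h \<longleftrightarrow> (\<forall>x y. h (m x y) = n (h x) (h y))"

definition extension ::
  "('a \<Rightarrow> 'a \<Rightarrow> 'a) \<Rightarrow> ('u \<Rightarrow> 'u \<Rightarrow> 'u) \<Rightarrow> ('s \<Rightarrow> 's \<Rightarrow> 's)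
    \<Rightarrow> ('a \<Rightarrow> 'u) \<Rightarrow> ('u \<Rightarrow> 's) \<Rightarrow> bool" where
  "extension mA mU mS i j \<longleftrightarrow>
     semilattice_of_groups mA \<and> inverse_semigroup mU \<and> inverse_semigroup mS \<and>
     hom mA mU i \<and> inj i \<and>
     hom mU mS j \<and> surj j \<and>
     (\<forall>e \<in> idems mU. \<forall>e' \<in> idems mU. j e = j e' \<longrightarrow> e = e') \<and>
     range i = j -` idems mS"

definition transversal ::
  "('u \<Rightarrow> 'u \<Rightarrow> 'u) \<Rightarrow> ('s \<Rightarrow> 's \<Rightarrow> 's) \<Rightarrow> ('u \<Rightarrow> 's) \<Rightarrow> ('s \<Rightarrow> 'u) \<Rightarrow> bool" where
  "transversal mU mS j \<rho> \<longleftrightarrow> (\<forall>s. j (\<rho> s) = s) \<and> \<rho> ` idems mS \<subseteq> idems mU"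

text \<open>Twisted S-module structure (alpha, lambda, f) induced by a transversal rho.
  alpha is only meaningful on E(S).\<close>
definition tw_alpha :: "('a \<Rightarrow> 'u) \<Rightarrow> ('s \<Rightarrow> 'u) \<Rightarrow> 's \<Rightarrow> 'a" where
  "tw_alpha i \<rho> e = inv i (\<rho> e)"

definition tw_lambda ::
  "('u \<Rightarrow> 'u \<Rightarrow> 'u) \<Rightarrow> ('a \<Rightarrow> 'u) \<Rightarrow> ('s \<Rightarrow> 'u) \<Rightarrow> 's \<Rightarrow> 'a \<Rightarrow> 'a" where
  "tw_lambda mU i \<rho> s a = inv i (mU (mU (\<rho> s) (i a)) (sinv mU (\<rho> s)))"

definition tw_f ::
  "('a \<Rightarrow> 'a \<Rightarrow> 'a) \<Rightarrow> ('u \<Rightarrow> 'u \<Rightarrow> 'u) \<Rightarrow> ('s \<Rightarrow> 's \<Rightarrow> 's)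
     \<Rightarrow> ('a \<Rightarrow> 'u) \<Rightarrow> ('s \<Rightarrow> 'u) \<Rightarrow> 's \<Rightarrow> 's \<Rightarrow> 'a" where
  "tw_f mA mU mS i \<rho> s t =
     (THE a. a \<in> comp_grp mA (tw_alpha i \<rho> (mS (mS s t) (sinv mS (mS s t)))) \<and>
             mU (\<rho> s) (\<rho> t) = mU (i a) (\<rho> (mS s t)))"

definition inner :: "('a \<Rightarrow> 'a \<Rightarrow> 'a) \<Rightarrow> 'a \<Rightarrow> 'a \<Rightarrow> 'a" where
  "inner m b a = m (m b a) (sinv m b)"

end

theory Submission
  imports Defs
begin

text \<open>Put g(s) = i\<inverse>(\<rho>'(s) \<rho>(s)\<inverse>). Since j(\<rho>'(s)) = j(\<rho>(s)) and j separates idempotents,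
  \<rho>'(s) and \<rho>(s) have the same domain and range idempotents \<rho>(s)\<inverse>\<rho>(s) and \<rho>(s)\<rho>(s)\<inverse>;
  hence g(s) lies in the group component of \<rho>(ss\<inverse>) and \<rho>'(s) = i(g(s)) \<rho>(s). Substituting this
  into the defining formulas of \<lambda>' and f', and using that idempotents of U coming from A are
  central in the image of A, gives (ii) and (iii); (i) holds because both transversals must send an
  idempotent of S to the unique idempotent of U above it.\<close>

locale inv_semigroup = fixes m :: "'a \<Rightarrow> 'a \<Rightarrow> 'a" assumes inverse_semigroup: "inverse_semigroup m"
begin

lemma assoc [simp]: "m (m x y) z = m x (m y z)"
  using inverse_semigroup unfolding inverse_semigroup_def by blast

lemma ex1_sinv: "\<exists>!y. m (m x y) x = x \<and> m (m y x) y = y"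
  using inverse_semigroup unfolding inverse_semigroup_def by blast

lemma mult_sinv_mult [simp]: "m x (m (sinv m x) x) = x"
  and sinv_mult_sinv [simp]: "m (sinv m x) (m x (sinv m x)) = sinv m x"
  using theI'[OF ex1_sinv[of x]] unfolding sinv_def by simp_all

lemma mult_sinv_mult_left [simp]: "m x (m (sinv m x) (m x y)) = m x y"
  by (metis mult_sinv_mult assoc)

lemma sinv_mult_sinv_left [simp]: "m (sinv m x) (m x (m (sinv m x) y)) = m (sinv m x) y"
  by (metis sinv_mult_sinv assoc)

lemma sinv_unique: "m x (m y x) = x \<Longrightarrow> m y (m x y) = y \<Longrightarrow> sinv m x = y"
  unfolding sinv_def by (rule the1_equality[OF ex1_sinv]) simp

lemma sinv_sinv [simp]: "sinv m (sinv m x) = x"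
  by (rule sinv_unique) simp_all

lemma sinv_idem: "m e e = e \<Longrightarrow> sinv m e = e"
  by (rule sinv_unique) (simp_all flip: assoc)

lemma idem_mult_left: "m e e = e \<Longrightarrow> m e (m e w) = m e w"
  by (simp flip: assoc)

lemma idem_mult_closed:
  assumes e: "m e e = e" and f: "m f f = f"
  shows "m (m e f) (m e f) = m e f"
proof -
  define x where "x = sinv m (m e f)"
  have x_ef: "m (m e f) (m x (m e f)) = m e f" unfolding x_def by (rule mult_sinv_mult)
  have x: "m x (m (m e f) x) = x" unfolding x_def by (rule sinv_mult_sinv)
  have x_absorb: "m x (m e (m f (m x w))) = m x w" for w by (metis x assoc)
  \<comment> \<open>f x e is another inverse of ef, hence equals x\<close>
  have "sinv m (m e f) = m f (m x e)"
  proof (rule sinv_unique)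
    show "m (m e f) (m (m f (m x e)) (m e f)) = m e f"
      using x_ef e f by (simp add: idem_mult_left)
    show "m (m f (m x e)) (m (m e f) (m f (m x e))) = m f (m x e)"
      using x_absorb e f by (simp add: idem_mult_left)
  qed
  then have xe: "x = m f (m x e)" unfolding x_def .
  have "m x x = m f (m x (m e (m f (m x e))))" by (subst xe, subst (2) xe) simp
  also have "\<dots> = m f (m x e)" using x_absorb[of e] by simp
  finally have "m x x = x" using xe by simp
  then show ?thesis by (metis sinv_idem sinv_sinv x_def)
qed

lemma idems_commute:
  assumes e: "m e e = e" and f: "m f f = f"
  shows "m e f = m f e"
proof -
  have ef: "m (m e f) (m e f) = m e f" and fe: "m (m f e) (m f e) = m f e"
    using idem_mult_closed e f by blast+
  have "sinv m (m e f) = m f e"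
    by (rule sinv_unique) (use ef fe e f in \<open>simp_all add: idem_mult_left\<close>)
  with sinv_idem[OF ef] show ?thesis by simp
qed

lemma mult_sinv_in_idems: "m x (sinv m x) \<in> idems m"
  and sinv_mult_in_idems: "m (sinv m x) x \<in> idems m"
  unfolding idems_def by simp_all

end

lemma hom_sinv:
  assumes "inv_semigroup m" "inv_semigroup n" "hom m n h"
  shows "sinv n (h x) = h (sinv m x)"
proof -
  interpret M: inv_semigroup m by fact
  interpret N: inv_semigroup n by fact
  have h: "h (m x y) = n (h x) (h y)" for x y using assms(3) unfolding hom_def by blast
  show ?thesis by (rule N.sinv_unique) (simp_all flip: h)
qed

locale semigroup_extension =
  fixes mA :: "'a \<Rightarrow> 'a \<Rightarrow> 'a" and mU :: "'u \<Rightarrow> 'u \<Rightarrow> 'u" and mS :: "'s \<Rightarrow> 's \<Rightarrow> 's"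
    and i :: "'a \<Rightarrow> 'u" and j :: "'u \<Rightarrow> 's"
  assumes extension: "extension mA mU mS i j"
begin

sublocale U: inv_semigroup mU using extension unfolding extension_def inv_semigroup_def by blast
sublocale S: inv_semigroup mS using extension unfolding extension_def inv_semigroup_def by blast
sublocale A: inv_semigroup mA
  using extension unfolding extension_def inv_semigroup_def semilattice_of_groups_def by blast

lemma i_mult [simp]: "i (mA a b) = mU (i a) (i b)"
  and j_mult [simp]: "j (mU x y) = mS (j x) (j y)"
  using extension unfolding extension_def hom_def by blast+

lemma i_sinv [simp]: "i (sinv mA a) = sinv mU (i a)"
  using extension hom_sinv[of mA mU i a] A.inv_semigroup_axioms U.inv_semigroup_axioms
  unfolding extension_def by simp

lemma j_sinv [simp]: "j (sinv mU x) = sinv mS (j x)"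
  using extension hom_sinv[of mU mS j x] S.inv_semigroup_axioms U.inv_semigroup_axioms
  unfolding extension_def by simp

lemma inj_i: "inj i" using extension unfolding extension_def by blast

lemma inv_i_apply [simp]: "inv i (i a) = a" using inj_i by simp

lemma i_eq_iff [simp]: "i a = i b \<longleftrightarrow> a = b" using inj_i by (simp add: inj_eq)

lemma in_range_i_iff: "x \<in> range i \<longleftrightarrow> j x \<in> idems mS"
  using extension unfolding extension_def by blast

lemma i_inv_apply: "x \<in> range i \<Longrightarrow> i (inv i x) = x" by (simp add: f_inv_into_f)

lemma idem_eqI: "mU e e = e \<Longrightarrow> mU e' e' = e' \<Longrightarrow> j e = j e' \<Longrightarrow> e = e'"
  using extension unfolding extension_def idems_def by blast

lemma idems_central_A: "mA e e = e \<Longrightarrow> mA e x = mA x e"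
  using extension unfolding extension_def semilattice_of_groups_def idems_def by blast

lemma idems_central_range_i:
  assumes "x \<in> range i" "e \<in> range i" "mU e e = e"
  shows "mU x e = mU e x"
proof -
  obtain a b where "x = i a" "e = i b" using assms(1,2) by blast
  moreover from this have "mA b b = b" using assms(3) by (metis i_mult i_eq_iff)
  ultimately show ?thesis using idems_central_A by (metis i_mult)
qed

lemma sinv_mult_eq_if_same_j:
  assumes "j x = j z"
  shows "mU (sinv mU x) x = mU (sinv mU z) z" and "mU x (sinv mU x) = mU z (sinv mU z)"
  by (rule idem_eqI; simp add: assms)+

lemma sinv_mult_left_eq_if_same_j:
  assumes "j x = j z"
  shows "mU (sinv mU x) (mU x w) = mU (sinv mU z) (mU z w)"
  by (metis sinv_mult_eq_if_same_j(1)[OF assms] U.assoc)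

lemma sinv_mult_sinv_if_same_j:
  assumes "j x = j z"
  shows "sinv mU (mU x (sinv mU z)) = mU z (sinv mU x)"
  by (rule U.sinv_unique)
    (simp_all add: sinv_mult_left_eq_if_same_j[OF assms] sinv_mult_eq_if_same_j(1)[OF assms])

lemma mult_sinv_in_range_i: "j x = j z \<Longrightarrow> mU x (sinv mU z) \<in> range i"
  by (simp add: in_range_i_iff S.mult_sinv_in_idems)

lemma sinv_mult_in_range_i: "mU (sinv mU x) x \<in> range i"
  by (simp add: in_range_i_iff S.sinv_mult_in_idems)

lemma mult_sinv_in_comp_grp:
  assumes "j x = j z"
  shows "inv i (mU x (sinv mU z)) \<in> comp_grp mA (inv i (mU z (sinv mU z)))"
proof -
  define a where "a = inv i (mU x (sinv mU z))"
  have ia: "i a = mU x (sinv mU z)"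
    unfolding a_def by (rule i_inv_apply[OF mult_sinv_in_range_i[OF assms]])
  have "i (mA a (sinv mA a)) = mU z (sinv mU z)"
    apply (simp add: ia sinv_mult_sinv_if_same_j[OF assms]
        sinv_mult_left_eq_if_same_j[OF assms[symmetric]])
    by (metis sinv_mult_eq_if_same_j(2)[OF assms])
  then have "mA a (sinv mA a) = inv i (mU z (sinv mU z))" by (metis inv_i_apply)
  moreover have "i (mA (sinv mA a) a) = mU z (sinv mU z)"
    by (simp add: ia sinv_mult_sinv_if_same_j[OF assms] sinv_mult_left_eq_if_same_j[OF assms]
        sinv_mult_eq_if_same_j(1)[OF assms])
  then have "mA (sinv mA a) a = inv i (mU z (sinv mU z))" by (metis inv_i_apply)
  ultimately show ?thesis unfolding comp_grp_def a_def by blast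
qed

lemma comp_grp_absorbs_idem:
  assumes "a \<in> comp_grp mA (inv i (mU z (sinv mU z)))"
  shows "mU (i a) (mU z (sinv mU z)) = i a"
proof -
  have "i (mA (sinv mA a) a) = mU z (sinv mU z)"
    using assms i_inv_apply[OF mult_sinv_in_range_i[of z z]] unfolding comp_grp_def by simp
  then show ?thesis by (metis i_mult i_sinv U.mult_sinv_mult)
qed

lemma transversal_j [simp]: "transversal mU mS j \<rho> \<Longrightarrow> j (\<rho> s) = s"
  unfolding transversal_def by blast

lemma transversal_idem: "transversal mU mS j \<rho> \<Longrightarrow> e \<in> idems mS \<Longrightarrow> mU (\<rho> e) (\<rho> e) = \<rho> e"
  unfolding transversal_def idems_def by blast

lemma transversal_mult_sinv:
  "transversal mU mS j \<rho> \<Longrightarrow> mU (\<rho> s) (sinv mU (\<rho> s)) = \<rho> (mS s (sinv mS s))"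
  by (rule idem_eqI) (simp_all add: transversal_idem S.mult_sinv_in_idems)

lemma i_tw_lambda:
  assumes \<rho>: "transversal mU mS j \<rho>"
  shows "i (tw_lambda mU i \<rho> s a) = mU (\<rho> s) (mU (i a) (sinv mU (\<rho> s)))"
proof -
  \<comment> \<open>s e s\<inverse> is idempotent for idempotent e, because e commutes with s\<inverse>s\<close>
  let ?e = "j (i a)"
  have e: "mS ?e ?e = ?e" using in_range_i_iff[of "i a"] unfolding idems_def by simp
  have "mS ?e (mS (sinv mS s) s) = mS (mS (sinv mS s) s) ?e"
    by (rule S.idems_commute[OF e]) simp
  then have "mS ?e (mS (sinv mS s) (mS s w)) = mS (sinv mS s) (mS s (mS ?e w))" for w
    by (metis S.assoc)
  then have "mS s (mS ?e (mS (sinv mS s) (mS s (mS ?e (sinv mS s))))) = mS s (mS ?e (sinv mS s))"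
    by (simp add: S.idem_mult_left[OF e])
  then have "mU (\<rho> s) (mU (i a) (sinv mU (\<rho> s))) \<in> range i"
    using \<rho> unfolding in_range_i_iff idems_def by simp
  then show ?thesis unfolding tw_lambda_def by (simp add: i_inv_apply)
qed

lemma tw_f_eq:
  assumes \<rho>: "transversal mU mS j \<rho>"
  shows "tw_f mA mU mS i \<rho> s t = inv i (mU (mU (\<rho> s) (\<rho> t)) (sinv mU (\<rho> (mS s t))))"
proof -
  let ?x = "mU (\<rho> s) (\<rho> t)" and ?z = "\<rho> (mS s t)"
  let ?E = "inv i (mU ?z (sinv mU ?z))" and ?F = "inv i (mU ?x (sinv mU ?z))"
  have jxz: "j ?x = j ?z" using \<rho> by simp
  have alpha: "tw_alpha i \<rho> (mS (mS s t) (sinv mS (mS s t))) = ?E"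
    unfolding tw_alpha_def using transversal_mult_sinv[OF \<rho>] by simp
  have F: "?F \<in> comp_grp mA ?E \<and> ?x = mU (i ?F) ?z"
    using mult_sinv_in_comp_grp[OF jxz] i_inv_apply[OF mult_sinv_in_range_i[OF jxz]]
      sinv_mult_eq_if_same_j(1)[OF jxz]
    by (metis U.mult_sinv_mult U.assoc)
  have "b = ?F" if "b \<in> comp_grp mA ?E \<and> ?x = mU (i b) ?z" for b
    using that comp_grp_absorbs_idem by (metis U.assoc inv_i_apply)
  with F show ?thesis unfolding tw_f_def alpha by (intro the1_equality) blast+
qed

lemma i_tw_f:
  "transversal mU mS j \<rho> \<Longrightarrow>
    i (tw_f mA mU mS i \<rho> s t) = mU (mU (\<rho> s) (\<rho> t)) (sinv mU (\<rho> (mS s t)))"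
  unfolding tw_f_eq by (rule i_inv_apply[OF mult_sinv_in_range_i]) simp


definition transversal_change :: "('s \<Rightarrow> 'u) \<Rightarrow> ('s \<Rightarrow> 'u) \<Rightarrow> 's \<Rightarrow> 'a" where
  "transversal_change \<rho> \<rho>' s = inv i (mU (\<rho>' s) (sinv mU (\<rho> s)))"

context
  fixes \<rho> \<rho>' :: "'s \<Rightarrow> 'u"
  assumes \<rho>: "transversal mU mS j \<rho>" and \<rho>': "transversal mU mS j \<rho>'"
begin

private abbreviation "g \<equiv> transversal_change \<rho> \<rho>'"

private lemma same_j: "j (\<rho>' s) = j (\<rho> s)"
  using \<rho> \<rho>' by simp

private lemma i_g: "i (g s) = mU (\<rho>' s) (sinv mU (\<rho> s))"
  unfolding transversal_change_def by (rule i_inv_apply[OF mult_sinv_in_range_i[OF same_j]])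

private lemma sinv_mult_left_\<rho>:
  "mU (sinv mU (\<rho> s)) (mU (\<rho> s) w) = mU (sinv mU (\<rho>' s)) (mU (\<rho>' s) w)"
  by (rule sinv_mult_left_eq_if_same_j[OF same_j[symmetric]])

lemma transversal_change_in_comp_grp:
  "g s \<in> comp_grp mA (tw_alpha i \<rho> (mS s (sinv mS s)))"
  unfolding tw_alpha_def transversal_change_def transversal_mult_sinv[OF \<rho>, symmetric]
  by (rule mult_sinv_in_comp_grp[OF same_j])

lemma tw_alpha_transversal_indep:
  assumes "e \<in> idems mS"
  shows "tw_alpha i \<rho>' e = tw_alpha i \<rho> e"
proof -
  have "\<rho>' e = \<rho> e" by (rule idem_eqI) (simp_all add: transversal_idem \<rho> \<rho>' assms)
  then show ?thesis unfolding tw_alpha_def by simp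
qed

lemma tw_lambda_transversal_change:
  "tw_lambda mU i \<rho>' s a = inner mA (g s) (tw_lambda mU i \<rho> s a)"
proof -
  have "i (tw_lambda mU i \<rho>' s a) = i (inner mA (g s) (tw_lambda mU i \<rho> s a))"
    unfolding inner_def
    by (simp add: i_tw_lambda[OF \<rho>] i_tw_lambda[OF \<rho>'] i_g sinv_mult_sinv_if_same_j[OF same_j]
        sinv_mult_left_\<rho>)
  then show ?thesis by simp
qed

lemma tw_f_transversal_change:
  "mA (tw_f mA mU mS i \<rho>' s t) (g (mS s t)) =
     mA (mA (g s) (tw_lambda mU i \<rho> s (g t))) (tw_f mA mU mS i \<rho> s t)"
proof -
  let ?z = "\<rho> (mS s t)" and ?d = "mU (sinv mU (\<rho> s)) (\<rho> s)"
  have "mU (i (g t)) ?d = mU ?d (i (g t))"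
    by (rule idems_central_range_i[OF rangeI sinv_mult_in_range_i]) simp
  then have "mU (mU (i (g t)) (sinv mU (\<rho> s))) (\<rho> s) = mU ?d (i (g t))"
    by simp
  then have commute: "mU (i (g t)) (mU (sinv mU (\<rho> s)) (mU (\<rho> s) w)) =
      mU (sinv mU (\<rho> s)) (mU (\<rho> s) (mU (i (g t)) w))" for w
    by (simp flip: U.assoc)
  have "i (mA (tw_f mA mU mS i \<rho>' s t) (g (mS s t))) = mU (\<rho>' s) (mU (\<rho>' t) (sinv mU ?z))"
    by (simp add: i_tw_f[OF \<rho>'] i_g sinv_mult_left_\<rho>[symmetric])
  also have "\<dots> = mU (\<rho>' s) (mU (sinv mU (\<rho> s)) (mU (\<rho> s) (mU (i (g t)) (mU (\<rho> t) (sinv mU ?z)))))"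
    by (simp add: i_g sinv_mult_left_\<rho>)
  also have "\<dots> = mU (\<rho>' s) (mU (sinv mU (\<rho> s)) (mU (\<rho> s) (mU (i (g t))
      (mU (sinv mU (\<rho> s)) (mU (\<rho> s) (mU (\<rho> t) (sinv mU ?z)))))))"
    by (simp only: commute U.sinv_mult_sinv_left)
  also have "\<dots> = i (mA (mA (g s) (tw_lambda mU i \<rho> s (g t))) (tw_f mA mU mS i \<rho> s t))"
    by (simp only: i_mult i_tw_lambda[OF \<rho>] i_tw_f[OF \<rho>] i_g[of s] U.assoc)
  finally show ?thesis by (simp only: i_eq_iff)
qed

end

end

theorem proposition3p10:
  fixes mA :: "'a \<Rightarrow> 'a \<Rightarrow> 'a" and mU :: "'u \<Rightarrow> 'u \<Rightarrow> 'u" and mS :: "'s \<Rightarrow> 's \<Rightarrow> 's"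
    and i :: "'a \<Rightarrow> 'u" and j :: "'u \<Rightarrow> 's" and \<rho> \<rho>' :: "'s \<Rightarrow> 'u"
  assumes "extension mA mU mS i j"
    and "transversal mU mS j \<rho>" and "transversal mU mS j \<rho>'"
  shows "\<exists>g :: 's \<Rightarrow> 'a.
     (\<forall>s. g s \<in> comp_grp mA (tw_alpha i \<rho> (mS s (sinv mS s)))) \<and>
     (\<forall>e \<in> idems mS. tw_alpha i \<rho>' e = tw_alpha i \<rho> e) \<and>
     (\<forall>s a. tw_lambda mU i \<rho>' s a = inner mA (g s) (tw_lambda mU i \<rho> s a)) \<and>
     (\<forall>s t. mA (tw_f mA mU mS i \<rho>' s t) (g (mS s t)) =
            mA (mA (g s) (tw_lambda mU i \<rho> s (g t))) (tw_f mA mU mS i \<rho> s t))"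
proof -
  interpret semigroup_extension mA mU mS i j by unfold_locales fact
  show ?thesis
    by (intro exI[of _ "transversal_change \<rho> \<rho>'"] conjI allI ballI
        transversal_change_in_comp_grp[OF assms(2,3)] tw_alpha_transversal_indep[OF assms(2,3)]
        tw_lambda_transversal_change[OF assms(2,3)] tw_f_transversal_change[OF assms(2,3)])
qed

end
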